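(* Let $p$ be an odd prime and $q\in\mathbb C_p$ with $|1-q|_p<p^{-1/(p-1)}$. For $n\in\mathbb Z_+$ and $x\in\mathbb Z_p$, $$E_{n,q}(x)=\frac{2}{(1-q)^n}\sum_{l=0}^n\sum_{k=l}^n(-1)^l(q-1)^{k-l}\binom nk_q s_{1,q}(k,l)\frac{q^{lx}}{1+q^l}.$$
   Context: $[x]_q=\frac{1-q^x}{1-q}$. The fermionic $p$-adic integral of a uniformly differentiable $f:\mathbb Z_p\to\mathbb C_p$ is $\int_{\mathbb Z_p}f(y)\,d\mu_{-1}(y)=\lim_{N\to\infty}\sum_{y=0}^{p^N-1}f(y)(-1)^y$. The $q$-Euler polynomials are $E_{n,q}(x)=\int_{\mathbb Z_p}[x+y]_q^n\,d\mu_{-1}(y)$. $[n]_q!=[n]_q\cdots[1]_q$ ($[0]_q!=1$), $\binom nk_q=\frac{[n]_q!}{[k]_q![n-k]_q!}$. The $q$-Stirling numbers of the first kind $s_{1,q}(k,l)$ are defined by $[x]_q[x-1]_q\cdots[x-k+1]_q=q^{-\binom k2}\sum_{l=0}^k s_{1,q}(k,l)[x]_q^l$, as an identity of polynomials in $[x]_q$ (using $[x-i]_q=q^{-i}([x]_q-[i]_q)$). *)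

theory Defs
  imports "HOL-Computational_Algebra.Polynomial" Complex_Main
begin

definition nonarch_absval :: "nat \<Rightarrow> ('a::field_char_0 \<Rightarrow> real) \<Rightarrow> bool" where
  "nonarch_absval p v \<longleftrightarrow>
     (\<forall>x. 0 \<le> v x) \<and> (\<forall>x. v x = 0 \<longleftrightarrow> x = 0) \<and>
     (\<forall>x y. v (x * y) = v x * v y) \<and>
     (\<forall>x y. v (x + y) \<le> max (v x) (v y)) \<and>
     v (of_nat p) = 1 / real p"

definition vconv :: "('a::field_char_0 \<Rightarrow> real) \<Rightarrow> (nat \<Rightarrow> 'a) \<Rightarrow> 'a \<Rightarrow> bool" where
  "vconv v X L \<longleftrightarrow> (\<lambda>k. v (X k - L)) \<longlonglongrightarrow> 0"

definition vcauchy :: "('a::field_char_0 \<Rightarrow> real) \<Rightarrow> (nat \<Rightarrow> 'a) \<Rightarrow> bool" where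
  "vcauchy v X \<longleftrightarrow> (\<forall>e>0. \<exists>N. \<forall>m\<ge>N. \<forall>n\<ge>N. v (X m - X n) < e)"

definition is_Cp :: "nat \<Rightarrow> ('a::field_char_0 \<Rightarrow> real) \<Rightarrow> bool" where
  "is_Cp p v \<longleftrightarrow> nonarch_absval p v \<and>
     (\<forall>X. vcauchy v X \<longrightarrow> (\<exists>L. vconv v X L)) \<and>
     (\<forall>P::'a poly. 0 < degree P \<longrightarrow> (\<exists>z. poly P z = 0))"

definition Zp :: "('a::field_char_0 \<Rightarrow> real) \<Rightarrow> 'a set" where
  "Zp v = {x. \<exists>X::nat \<Rightarrow> nat. vconv v (\<lambda>k. of_nat (X k)) x}"

text \<open>q^x for x in Z_p, as the continuous extension of n \<mapsto> q^n.\<close>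
definition qpow :: "('a::field_char_0 \<Rightarrow> real) \<Rightarrow> 'a \<Rightarrow> 'a \<Rightarrow> 'a" where
  "qpow v q x = (THE y. \<forall>X::nat \<Rightarrow> nat.
      vconv v (\<lambda>k. of_nat (X k)) x \<longrightarrow> vconv v (\<lambda>k. q ^ X k) y)"

definition qint :: "('a::field_char_0 \<Rightarrow> real) \<Rightarrow> 'a \<Rightarrow> 'a \<Rightarrow> 'a" where
  "qint v q x = (1 - qpow v q x) / (1 - q)"

definition qnat :: "'a::field \<Rightarrow> nat \<Rightarrow> 'a" where
  "qnat q n = (1 - q ^ n) / (1 - q)"

definition qfact :: "'a::field \<Rightarrow> nat \<Rightarrow> 'a" where
  "qfact q n = (\<Prod>i\<in>{1..n}. qnat q i)"

definition qbinom :: "'a::field \<Rightarrow> nat \<Rightarrow> nat \<Rightarrow> 'a" where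
  "qbinom q n k = qfact q n / (qfact q k * qfact q (n - k))"

text \<open>q-Stirling numbers of the first kind: coefficients s with
  prod_{i<k} q^{-i}(t - [i]_q) = q^{-binom k 2} sum_l s(k,l) t^l as polynomials in t.\<close>
definition qstirling1 :: "'a::field \<Rightarrow> nat \<Rightarrow> nat \<Rightarrow> 'a" where
  "qstirling1 q k l = coeff (smult (q ^ (k choose 2))
      (\<Prod>i<k. smult (inverse q ^ i) [:- qnat q i, 1:])) l"

definition fermionic_int :: "nat \<Rightarrow> ('a::field_char_0 \<Rightarrow> real) \<Rightarrow> (nat \<Rightarrow> 'a) \<Rightarrow> 'a" where
  "fermionic_int p v f = (THE L. vconv v (\<lambda>N. \<Sum>y<p ^ N. f y * (-1) ^ y) L)"

definition qEuler :: "nat \<Rightarrow> ('a::field_char_0 \<Rightarrow> real) \<Rightarrow> 'a \<Rightarrow> nat \<Rightarrow> 'a \<Rightarrow> 'a" where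
  "qEuler p v q n x = fermionic_int p v (\<lambda>y. qint v q (x + of_nat y) ^ n)"

end

theory Submission
  imports Defs "HOL-Computational_Algebra.Primes"
begin

(*
  Write Q = q^x. Since [x + y]_q = (1 - Q q^y) / (1 - q), the binomial theorem turns the
  Riemann sum over y < p^N (an odd number) into a combination of alternating geometric sums,
    sum_l C(n,l) (-Q)^l (1 + q^(l p^N)) / ((1 - q)^n (1 + q^l)),
  and |1 - q^(p^N)| -> 0 gives E_{n,q}(x) = 2/(1-q)^n sum_l (-1)^l C(n,l) Q^l / (1 + q^l).
  The double sum of the theorem collapses to this by
    sum_k (q-1)^(k-l) [n,k]_q s_{1,q}(k,l) = C(n,l),
  obtained by comparing coefficients of t^l in the q-binomial expansion
  z^n = sum_k [n,k]_q prod_{i<k} (z - q^i) at z = 1 + (q - 1) t, where z - q^i = (q - 1)(t - [i]_q).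

  The bound |1 - q| < p^(-1/(p-1)) makes n |-> q^n uniformly continuous for the p-adic
  topology, so that q^x is defined on Z_p, and rules out roots of unity q /= 1, so that
  [k]_q /= 0; as p is odd, |2| = 1 also excludes 1 + q^l = 0.
*)

section \<open>Non-archimedean absolute values\<close>

locale padic_absval =
  fixes p :: nat and v :: "'a::field_char_0 \<Rightarrow> real"
  assumes absval: "nonarch_absval p v" and prime: "prime p"
begin

lemma v_nonneg [simp]: "0 \<le> v x"
  using absval unfolding nonarch_absval_def by blast

lemma v_eq_0_iff [simp]: "v x = 0 \<longleftrightarrow> x = 0"
  using absval unfolding nonarch_absval_def by blast

lemma v_0 [simp]: "v 0 = 0"
  by simp

lemma v_mult: "v (x * y) = v x * v y"
  using absval unfolding nonarch_absval_def by blast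

lemma v_add_le_max: "v (x + y) \<le> max (v x) (v y)"
  using absval unfolding nonarch_absval_def by blast

lemma v_of_nat_p: "v (of_nat p) = 1 / real p"
  using absval unfolding nonarch_absval_def by blast

lemma p_gt_1: "1 < p"
  using prime prime_gt_1_nat by blast

lemma v_one [simp]: "v 1 = 1"
proof -
  have "v 1 = v 1 * v 1" using v_mult[of 1 1] by simp
  moreover have "v 1 \<noteq> 0" by simp
  ultimately show ?thesis by (metis mult_cancel_left1)
qed

lemma v_minus [simp]: "v (- x) = v x"
proof -
  have "v (-1) ^ 2 = 1" using v_mult[of "-1" "-1"] by (simp add: power2_eq_square)
  then have "v (-1) = 1" using v_nonneg[of "-1"] by (simp add: power2_eq_1_iff)
  then show ?thesis using v_mult[of "-1" x] by simp
qed

lemma v_minus_commute: "v (x - y) = v (y - x)"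
  by (metis minus_diff_eq v_minus)

lemma v_power: "v (x ^ n) = v x ^ n"
  by (induction n) (auto simp: v_mult)

lemma v_diff_le_max: "v (x - y) \<le> max (v x) (v y)"
  using v_add_le_max[of x "- y"] by simp

lemma v_add_le: "v (x + y) \<le> v x + v y"
  using v_add_le_max[of x y] v_nonneg[of x] v_nonneg[of y] by linarith

lemma v_diff_le: "v (x - y) \<le> v x + v y"
  using v_add_le[of x "- y"] by simp

lemma v_add_eq_left:
  assumes "v y < v x"
  shows "v (x + y) = v x"
proof -
  have "v (x + y) \<le> v x" using v_add_le_max[of x y] assms by simp
  moreover have "v x \<le> max (v (x + y)) (v y)" using v_diff_le_max[of "x + y" y] by simp
  ultimately show ?thesis using assms by linarith
qed

lemma v_sum_le:
  assumes "0 \<le> B" and "\<And>k. k \<in> A \<Longrightarrow> v (f k) \<le> B"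
  shows "v (sum f A) \<le> B"
  using assms
proof (induction A rule: infinite_finite_induct)
  case (insert x F)
  then have "max (v (f x)) (v (sum f F)) \<le> B" by simp
  then show ?case using v_add_le_max[of "f x" "sum f F"] insert(1,2) by (simp add: max_def split: if_splits)
qed simp_all

lemma v_sum_less:
  assumes "0 < B" and "\<And>k. k \<in> A \<Longrightarrow> v (f k) < B"
  shows "v (sum f A) < B"
  using assms
proof (induction A rule: infinite_finite_induct)
  case (insert x F)
  then have "max (v (f x)) (v (sum f F)) < B" by simp
  then show ?case using v_add_le_max[of "f x" "sum f F"] insert(1,2) by (simp add: max_def split: if_splits)
qed simp_all

lemma v_of_nat_le_1: "v (of_nat n) \<le> 1"
proof (induction n)
  case (Suc n)
  then show ?case using v_add_le_max[of 1 "of_nat n"] by simp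
qed simp

lemma v_of_int_le_1: "v (of_int z) \<le> 1"
proof (cases z rule: int_cases)
  case (nonneg n)
  then show ?thesis using v_of_nat_le_1[of n] by simp
next
  case (neg n)
  then show ?thesis using v_of_nat_le_1[of "Suc n"] by (simp del: of_nat_Suc)
qed

lemma v_of_nat_eq_1:
  assumes "\<not> p dvd m"
  shows "v (of_nat m) = 1"
proof -
  have "coprime (int m) (int p)"
    using prime assms prime_imp_coprime coprime_commute by (metis coprime_int_iff)
  then obtain a b where "a * int m + b * int p = 1"
    using bezout_int by (metis coprime_iff_gcd_eq_1)
  then have "(1::'a) = of_int a * of_nat m + of_int b * of_nat p"
    by (metis of_int_1 of_int_add of_int_mult of_int_of_nat_eq)
  then have "1 \<le> max (v (of_int a * of_nat m)) (v (of_int b * of_nat p))"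
    by (metis v_add_le_max v_one)
  moreover have "v (of_int b * of_nat p) \<le> 1 / real p"
    using v_of_int_le_1[of b] by (simp add: v_mult v_of_nat_p divide_right_mono)
  moreover have "1 / real p < 1" using p_gt_1 by simp
  moreover have "v (of_int a * of_nat m) \<le> v (of_nat m)"
    using v_of_int_le_1[of a] by (simp add: v_mult mult_left_le_one_le)
  ultimately show ?thesis using v_of_nat_le_1[of m] by linarith
qed

lemma v_of_nat_le_if_dvd:
  assumes "p dvd m"
  shows "v (of_nat m) \<le> 1 / real p"
proof -
  obtain r where "m = p * r" using assms by blast
  then show ?thesis using v_of_nat_le_1[of r] by (simp add: v_mult v_of_nat_p divide_right_mono)
qed

lemma v_of_nat_ge_or_dvd: "1 / real p ^ N \<le> v (of_nat m) \<or> p ^ N dvd m"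
proof (induction N)
  case (Suc N)
  show ?case
  proof (cases "p ^ N dvd m")
    case False
    moreover have "1 / real p ^ Suc N \<le> 1 / real p ^ N"
      using p_gt_1 by (simp add: frac_le)
    ultimately show ?thesis using Suc by auto
  next
    case True
    then obtain r where r: "m = p ^ N * r" by blast
    show ?thesis
    proof (cases "p dvd r")
      case True
      then show ?thesis using r by (simp add: mult_dvd_mono)
    next
      case False
      then have "v (of_nat m) = (1 / real p) ^ N"
        using v_of_nat_eq_1 r by (simp add: v_mult v_power v_of_nat_p)
      then show ?thesis using p_gt_1 by (simp add: power_one_over frac_le)
    qed
  qed
qed simp

lemma v_two:
  assumes "odd p"
  shows "v 2 = 1"
proof -
  have "p \<noteq> 2" using assms by auto
  then have "\<not> p dvd 2" using p_gt_1 by (auto dest: dvd_imp_le)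
  then show ?thesis using v_of_nat_eq_1[of 2] by simp
qed

lemma less_1_if_power_less_inverse_p:
  assumes "0 \<le> x" and "x ^ (p - 1) < 1 / real p"
  shows "x < 1"
proof (rule power_less_imp_less_base)
  have "1 / real p < 1" using p_gt_1 by simp
  then show "x ^ (p - 1) < 1 ^ (p - 1)" using assms(2) by simp
qed simp

lemma v_one_minus_power_le:
  assumes "v w \<le> 1"
  shows "v (1 - w ^ j) \<le> v (1 - w)"
proof -
  have "v (\<Sum>i<j. w ^ i) \<le> 1"
    by (rule v_sum_le) (use assms in \<open>auto simp: v_power power_le_one\<close>)
  then show ?thesis
    unfolding one_diff_power_eq[of w j] v_mult by (simp add: mult_left_le)
qed

text \<open>In \<open>(1 - d)\<^sup>p = 1\<close> the linear term \<open>- p d\<close> strictly dominates all the others.\<close>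
lemma root_of_unity_near_1:
  assumes root: "u ^ p = 1" and near: "v (1 - u) ^ (p - 1) < 1 / real p"
  shows "u = 1"
proof (rule ccontr)
  assume "u \<noteq> 1"
  define d where "d = 1 - u"
  define f where "f k = of_nat (p choose k) * (- d) ^ k" for k
  have vd: "0 < v d" "v d < 1"
    using \<open>u \<noteq> 1\<close> less_1_if_power_less_inverse_p[OF v_nonneg near]
    by (auto simp: d_def less_le)
  have "1 = (- d + 1) ^ p" using root by (simp add: d_def)
  also have "\<dots> = (\<Sum>k\<le>p. f k)" unfolding binomial_ring f_def by simp
  also have "\<dots> = f 0 + (f 1 + (\<Sum>k=2..p. f k))"
    using p_gt_1 by (simp add: atMost_atLeast0 sum.atLeast_Suc_atMost numeral_2_eq_2)
  finally have sum_0: "f 1 + (\<Sum>k=2..p. f k) = 0" by (simp add: f_def)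
  have "v (f k) < v d / real p" if k: "k \<in> {2..p}" for k
  proof (cases "k = p")
    case True
    have "v (f k) = v d * v d ^ (p - 1)"
      using True p_gt_1 by (simp add: f_def v_mult v_power power_Suc[symmetric])
    also have "\<dots> < v d * (1 / real p)"
      using near vd by (intro mult_strict_left_mono) (auto simp: d_def)
    finally show ?thesis by simp
  next
    case False
    have "p dvd (p choose k)" using k False prime by (intro dvd_choose_prime) auto
    then have "v (of_nat (p choose k)) \<le> 1 / real p" by (rule v_of_nat_le_if_dvd)
    then have "v (f k) \<le> 1 / real p * v d ^ k"
      unfolding f_def v_mult v_power v_minus by (rule mult_right_mono) simp
    also have "\<dots> < 1 / real p * v d"
      using vd k p_gt_1 power_strict_decreasing[of 1 k "v d"] by (simp add: divide_strict_right_mono)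
    finally show ?thesis by simp
  qed
  then have "v (\<Sum>k=2..p. f k) < v d / real p"
    using vd p_gt_1 by (intro v_sum_less) auto
  moreover have "v (f 1) = v d / real p" by (simp add: f_def v_mult v_of_nat_p)
  ultimately have "v (f 1 + (\<Sum>k=2..p. f k)) = v d / real p"
    using v_add_eq_left[of "\<Sum>k=2..p. f k" "f 1"] by simp
  with sum_0 vd p_gt_1 show False by simp
qed

section \<open>Convergence with respect to a non-archimedean absolute value\<close>

lemma vconv_iff: "vconv v X L \<longleftrightarrow> (\<forall>e>0. \<exists>N. \<forall>k\<ge>N. v (X k - L) < e)"
  unfolding vconv_def LIMSEQ_iff by simp

lemma vconv_if_bounded:
  assumes "\<And>k. v (X k - L) \<le> g k" and "g \<longlonglongrightarrow> 0"
  shows "vconv v X L"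
  unfolding vconv_def
  by (rule real_tendsto_sandwich[OF _ _ tendsto_const assms(2)]) (auto intro: always_eventually assms(1))

lemma vconv_unique:
  assumes "vconv v X a" and "vconv v X b"
  shows "a = b"
proof -
  have "vconv v (\<lambda>k. a) b"
  proof (rule vconv_if_bounded)
    show "v (a - b) \<le> v (X k - a) + v (X k - b)" for k
      using v_diff_le[of "X k - b" "X k - a"] by simp
    show "(\<lambda>k. v (X k - a) + v (X k - b)) \<longlonglongrightarrow> 0"
      using tendsto_add[OF assms[unfolded vconv_def]] by simp
  qed
  then show ?thesis by (simp add: vconv_def LIMSEQ_const_iff)
qed

lemma vconv_const: "vconv v (\<lambda>k. c) c"
  unfolding vconv_def by simp

lemma vconv_add:
  assumes "vconv v X a" and "vconv v Y b"
  shows "vconv v (\<lambda>k. X k + Y k) (a + b)"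
proof (rule vconv_if_bounded)
  show "v (X k + Y k - (a + b)) \<le> v (X k - a) + v (Y k - b)" for k
    using v_add_le[of "X k - a" "Y k - b"] by (simp add: algebra_simps)
  show "(\<lambda>k. v (X k - a) + v (Y k - b)) \<longlonglongrightarrow> 0"
    using tendsto_add[OF assms[unfolded vconv_def]] by simp
qed

lemma vconv_mult:
  assumes "vconv v X a" and "vconv v Y b"
  shows "vconv v (\<lambda>k. X k * Y k) (a * b)"
proof (rule vconv_if_bounded)
  show "v (X k * Y k - a * b) \<le> (v (X k - a) + v a) * v (Y k - b) + v b * v (X k - a)" for k
  proof -
    have "X k * Y k - a * b = X k * (Y k - b) + b * (X k - a)" by (simp add: algebra_simps)
    then have "v (X k * Y k - a * b) \<le> v (X k) * v (Y k - b) + v b * v (X k - a)"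
      using v_add_le[of "X k * (Y k - b)" "b * (X k - a)"] by (simp add: v_mult)
    moreover have "v (X k) \<le> v (X k - a) + v a" using v_add_le[of "X k - a" a] by simp
    then have "v (X k) * v (Y k - b) \<le> (v (X k - a) + v a) * v (Y k - b)"
      by (rule mult_right_mono) simp
    ultimately show ?thesis by linarith
  qed
  have "(\<lambda>k. v (X k - a)) \<longlonglongrightarrow> 0" and "(\<lambda>k. v (Y k - b)) \<longlonglongrightarrow> 0"
    using assms unfolding vconv_def by auto
  then show "(\<lambda>k. (v (X k - a) + v a) * v (Y k - b) + v b * v (X k - a)) \<longlonglongrightarrow> 0"
    by (auto intro!: tendsto_eq_intros)
qed

lemma vconv_cmult: "vconv v X a \<Longrightarrow> vconv v (\<lambda>k. c * X k) (c * a)"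
  by (rule vconv_mult[OF vconv_const])

lemma vconv_power: "vconv v X a \<Longrightarrow> vconv v (\<lambda>k. X k ^ n) (a ^ n)"
  by (induction n) (auto simp: vconv_const intro: vconv_mult)

lemma vconv_sum:
  assumes "\<And>i. i \<in> A \<Longrightarrow> vconv v (X i) (a i)"
  shows "vconv v (\<lambda>k. \<Sum>i\<in>A. X i k) (\<Sum>i\<in>A. a i)"
  using assms
  by (induction A rule: infinite_finite_induct) (auto simp: vconv_const intro: vconv_add)

lemma fermionic_int_eqI:
  assumes "vconv v (\<lambda>N. \<Sum>y<p ^ N. f y * (-1) ^ y) L"
  shows "fermionic_int p v f = L"
  unfolding fermionic_int_def using assms vconv_unique by blast

end

section \<open>Powers of \<open>q\<close> for \<open>q\<close> close to 1\<close>

locale q_near_1 = padic_absval p v for p and v :: "'a::field_char_0 \<Rightarrow> real" +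
  fixes q :: 'a
  assumes v_one_minus_q_small: "v (1 - q) < real p powr (- 1 / (real p - 1))"
begin

lemma v_one_minus_q_power: "v (1 - q) ^ (p - 1) < 1 / real p"
proof -
  have "v (1 - q) ^ (p - 1) < (real p powr (- 1 / (real p - 1))) ^ (p - 1)"
    using v_one_minus_q_small p_gt_1 by (intro power_strict_mono) auto
  also have "\<dots> = real p powr (- 1 / (real p - 1) * real (p - 1))"
    using p_gt_1 by (simp add: powr_realpow[symmetric] powr_powr)
  also have "- 1 / (real p - 1) * real (p - 1) = -1"
    using p_gt_1 by simp
  finally show ?thesis
    using p_gt_1 by (simp add: powr_minus_divide)
qed

lemma v_one_minus_q_less_1: "v (1 - q) < 1"
  by (rule less_1_if_power_less_inverse_p[OF v_nonneg v_one_minus_q_power])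

lemma v_q [simp]: "v q = 1"
  using v_add_eq_left[of "- (1 - q)" 1] v_one_minus_q_less_1 by (simp add: v_minus_commute)

lemma q_neq_0: "q \<noteq> 0"
  using v_q by force

lemma v_q_power [simp]: "v (q ^ j) = 1"
  by (simp add: v_power)

lemma v_q_power_minus_1_le: "v (q ^ j - 1) \<le> v (1 - q)"
  using v_one_minus_power_le[of q j] by (simp add: v_minus_commute)

text \<open>For \<open>p \<nmid> m\<close> the sum \<open>1 + q + \<dots> + q\<^sup>m\<^sup>-\<^sup>1\<close> is congruent to the unit \<open>m\<close>;
  for \<open>m = p r\<close> the element \<open>q\<^sup>r\<close> is a \<open>p\<close>-th root of unity that is close to 1.\<close>
lemma q_eq_1_if_power_eq_1:
  assumes "q ^ m = 1" and "0 < m"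
  shows "q = 1"
  using assms
proof (induction m rule: less_induct)
  case (less m)
  show ?case
  proof (cases "p dvd m")
    case False
    have "v (of_nat m + (\<Sum>j<m. q ^ j - 1)) = 1"
    proof -
      have "v (\<Sum>j<m. q ^ j - 1) < 1"
        using v_q_power_minus_1_le v_one_minus_q_less_1 by (intro v_sum_less) (auto intro: le_less_trans)
      then show ?thesis using v_add_eq_left v_of_nat_eq_1[OF False] by simp
    qed
    moreover have "(1 - q) * (of_nat m + (\<Sum>j<m. q ^ j - 1)) = 0"
      using one_diff_power_eq[of q m] less.prems by (simp add: sum_subtractf)
    ultimately show ?thesis by auto
  next
    case True
    then obtain r where r: "m = p * r" by blast
    have "0 < r" "r < m" using r less.prems p_gt_1 by auto
    have "(q ^ r) ^ p = 1"
      using less.prems r by (simp add: power_mult[symmetric] mult.commute)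
    moreover have "v (1 - q ^ r) ^ (p - 1) < 1 / real p"
      using power_mono[OF v_one_minus_power_le[of q r], of "p - 1"] v_one_minus_q_power by simp
    ultimately have "q ^ r = 1" by (rule root_of_unity_near_1)
    then show ?thesis using less.IH[OF \<open>r < m\<close> _ \<open>0 < r\<close>] by simp
  qed
qed

lemma one_plus_q_power_neq_0:
  assumes "odd p"
  shows "1 + q ^ l \<noteq> 0"
proof
  assume "1 + q ^ l = 0"
  then have "1 - q ^ l = 2" by (simp add: algebra_simps eq_neg_iff_add_eq_0)
  then have "v (1 - q ^ l) = 1" using v_two[OF assms] by (simp only:)
  then show False using v_one_minus_power_le[of q l] v_one_minus_q_less_1 by simp
qed

definition q_decay :: real where
  "q_decay = max (1 / real p) (v (1 - q))"

lemma q_decay_nonneg: "0 \<le> q_decay"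
  by (simp add: q_decay_def le_max_iff_disj)

lemma q_decay_less_1: "q_decay < 1"
  using v_one_minus_q_less_1 p_gt_1 by (simp add: q_decay_def)

lemma v_one_minus_q_power_p_power: "v (1 - q ^ p ^ N) \<le> q_decay ^ N"
proof (induction N)
  case 0
  then show ?case using v_one_minus_q_less_1 by simp
next
  case (Suc N)
  define w where "w = q ^ p ^ N"
  have "v (of_nat p + (\<Sum>j<p. w ^ j - 1)) \<le> q_decay"
  proof (rule order_trans[OF v_add_le_max max.boundedI])
    show "v (of_nat p) \<le> q_decay" by (simp add: v_of_nat_p q_decay_def)
    have "v (w ^ j - 1) \<le> v (1 - q)" for j
      using v_q_power_minus_1_le[of "p ^ N * j"] by (simp add: w_def power_mult)
    then show "v (\<Sum>j<p. w ^ j - 1) \<le> q_decay"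
      by (intro v_sum_le) (auto simp: q_decay_def intro: le_max_iff_disj[THEN iffD2])
  qed
  moreover have "1 - q ^ p ^ Suc N = (1 - w) * (of_nat p + (\<Sum>j<p. w ^ j - 1))"
  proof -
    have "q ^ p ^ Suc N = w ^ p" by (simp add: w_def power_mult[symmetric] mult.commute)
    then show ?thesis using one_diff_power_eq[of w p] by (simp add: sum_subtractf)
  qed
  ultimately have "v (1 - q ^ p ^ Suc N) \<le> q_decay ^ N * q_decay"
    using Suc.IH q_decay_nonneg by (auto simp: v_mult w_def intro!: mult_mono)
  then show ?case by (simp add: mult.commute)
qed

lemma v_q_power_diff_le:
  assumes "v (of_nat a - of_nat b :: 'a) < 1 / real p ^ N"
  shows "v (q ^ a - q ^ b) \<le> q_decay ^ N"
proof -
  have *: "v (q ^ (b + m) - q ^ b) \<le> q_decay ^ N"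
    if "v (of_nat m :: 'a) < 1 / real p ^ N" for b m
  proof -
    have "p ^ N dvd m" using v_of_nat_ge_or_dvd[of N m] that by (meson not_le)
    then obtain r where r: "m = p ^ N * r" by blast
    have "q ^ m = (q ^ p ^ N) ^ r" by (simp add: r power_mult)
    then have "q ^ (b + m) - q ^ b = - (q ^ b * (1 - (q ^ p ^ N) ^ r))"
      by (simp add: power_add algebra_simps)
    then have "v (q ^ (b + m) - q ^ b) = v (1 - (q ^ p ^ N) ^ r)" by (simp add: v_mult)
    also have "\<dots> \<le> v (1 - q ^ p ^ N)" by (rule v_one_minus_power_le) simp
    finally show ?thesis using v_one_minus_q_power_p_power by (rule order_trans)
  qed
  show ?thesis
  proof (cases "b \<le> a")
    case True
    then show ?thesis using *[of "a - b" b] assms by simp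
  next
    case False
    then show ?thesis using *[of "b - a" a] assms
      by (simp add: v_minus_commute)
  qed
qed

lemma q_power_uniformly_continuous:
  assumes "0 < e"
  obtains d where "0 < d" and "\<And>a b. v (of_nat a - of_nat b :: 'a) < d \<Longrightarrow> v (q ^ a - q ^ b) < e"
proof -
  obtain N where "q_decay ^ N < e"
    using real_arch_pow_inv[OF assms q_decay_less_1] by blast
  then show ?thesis
    using that[of "1 / real p ^ N"] p_gt_1 v_q_power_diff_le by force
qed

lemma vcauchy_q_power:
  assumes "vconv v (\<lambda>k. of_nat (X k)) x"
  shows "vcauchy v (\<lambda>k. q ^ X k)"
  unfolding vcauchy_def
proof (intro allI impI)
  fix e :: real
  assume "0 < e"
  then obtain d where "0 < d" and d: "\<And>a b. v (of_nat a - of_nat b :: 'a) < d \<Longrightarrow> v (q ^ a - q ^ b) < e"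
    using q_power_uniformly_continuous by blast
  then obtain K where K: "\<forall>k\<ge>K. v (of_nat (X k) - x) < d"
    using assms unfolding vconv_iff by blast
  have "v (q ^ X m - q ^ X n) < e" if "K \<le> m" "K \<le> n" for m n
  proof (rule d)
    have "v (of_nat (X m) - of_nat (X n) :: 'a) \<le> max (v (of_nat (X m) - x)) (v (of_nat (X n) - x))"
      using v_diff_le_max[of "of_nat (X m) - x" "of_nat (X n) - x"] by simp
    then show "v (of_nat (X m) - of_nat (X n) :: 'a) < d"
      using K that by (metis le_less_trans max_less_iff_conj)
  qed
  then show "\<exists>K. \<forall>m\<ge>K. \<forall>n\<ge>K. v (q ^ X m - q ^ X n) < e" by blast
qed

lemma vconv_q_power_diff:
  assumes "vconv v (\<lambda>k. of_nat (X k)) x" and "vconv v (\<lambda>k. of_nat (Y k)) x"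
  shows "vconv v (\<lambda>k. q ^ X k - q ^ Y k) 0"
  unfolding vconv_iff
proof (intro allI impI)
  fix e :: real
  assume "0 < e"
  then obtain d where "0 < d" and d: "\<And>a b. v (of_nat a - of_nat b :: 'a) < d \<Longrightarrow> v (q ^ a - q ^ b) < e"
    using q_power_uniformly_continuous by blast
  then obtain K1 K2 where K1: "\<forall>k\<ge>K1. v (of_nat (X k) - x) < d"
    and K2: "\<forall>k\<ge>K2. v (of_nat (Y k) - x) < d"
    using assms unfolding vconv_iff by meson
  have "v (q ^ X k - q ^ Y k - 0) < e" if "max K1 K2 \<le> k" for k
  proof -
    have "v (of_nat (X k) - of_nat (Y k) :: 'a) \<le> max (v (of_nat (X k) - x)) (v (of_nat (Y k) - x))"
      using v_diff_le_max[of "of_nat (X k) - x" "of_nat (Y k) - x"] by simp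
    then show ?thesis using d K1 K2 that by (simp add: le_less_trans)
  qed
  then show "\<exists>K. \<forall>k\<ge>K. v (q ^ X k - q ^ Y k - 0) < e" by blast
qed

lemma vconv_q_power_p_power: "vconv v (\<lambda>N. q ^ p ^ N) 1"
proof (rule vconv_if_bounded)
  show "v (q ^ p ^ N - 1) \<le> q_decay ^ N" for N
    using v_one_minus_q_power_p_power[of N] by (simp add: v_minus_commute)
  show "(\<lambda>N. q_decay ^ N) \<longlonglongrightarrow> 0"
    using q_decay_nonneg q_decay_less_1 by (intro LIMSEQ_power_zero) simp
qed

end

section \<open>Gaussian binomial coefficients and \<open>q\<close>-Stirling numbers\<close>

fun gauss_binom :: "'a::field \<Rightarrow> nat \<Rightarrow> nat \<Rightarrow> 'a" where
  "gauss_binom q 0 k = (if k = 0 then 1 else 0)"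
| "gauss_binom q (Suc n) 0 = 1"
| "gauss_binom q (Suc n) (Suc k) = gauss_binom q n k + q ^ Suc k * gauss_binom q n (Suc k)"

lemma gauss_binom_eq_0: "n < k \<Longrightarrow> gauss_binom q n k = 0"
proof (induction n arbitrary: k)
  case (Suc n)
  then show ?case by (cases k) auto
qed simp

lemma gauss_binom_0_right [simp]: "gauss_binom q n 0 = 1"
  by (cases n) auto

lemma qnat_0 [simp]: "qnat q 0 = 0"
  by (simp add: qnat_def)

lemma qnat_add: "q \<noteq> 1 \<Longrightarrow> qnat q (a + b) = qnat q a + q ^ a * qnat q b"
  unfolding qnat_def by (simp add: field_simps power_add)

lemma qfact_0 [simp]: "qfact q 0 = 1"
  by (simp add: qfact_def)

lemma qfact_Suc: "qfact q (Suc n) = qnat q (Suc n) * qfact q n"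
  unfolding qfact_def by (simp add: atLeastAtMostSuc_conv)

text \<open>Pascal's rule for \<open>gauss_binom\<close> mirrors the splitting \<open>[n+1] = [k+1] + q\<^sup>k\<^sup>+\<^sup>1 [n-k]\<close>.\<close>
lemma qfact_eq_gauss_binom:
  assumes "q \<noteq> 1" and "k \<le> n"
  shows "qfact q n = gauss_binom q n k * qfact q k * qfact q (n - k)"
  using assms(2)
proof (induction n arbitrary: k)
  case (Suc n)
  show ?case
  proof (cases k)
    case (Suc j)
    with Suc.prems have "j \<le> n" by simp
    have split: "qnat q (Suc n) = qnat q (Suc j) + q ^ Suc j * qnat q (n - j)"
      using qnat_add[OF assms(1), of "Suc j" "n - j"] \<open>j \<le> n\<close> by simp
    have left: "qnat q (Suc j) * qfact q n = gauss_binom q n j * qfact q (Suc j) * qfact q (n - j)"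
      using Suc.IH[OF \<open>j \<le> n\<close>] by (simp add: qfact_Suc)
    have right: "qnat q (n - j) * qfact q n = gauss_binom q n (Suc j) * qfact q (Suc j) * qfact q (n - j)"
    proof (cases "j < n")
      case True
      then have "n - j = Suc (n - Suc j)" by simp
      then show ?thesis using Suc.IH[of "Suc j"] True by (simp add: qfact_Suc)
    qed (use \<open>j \<le> n\<close> in \<open>simp add: gauss_binom_eq_0\<close>)
    have "qfact q (Suc n) = qnat q (Suc j) * qfact q n + q ^ Suc j * (qnat q (n - j) * qfact q n)"
      by (simp add: qfact_Suc split algebra_simps)
    also have "\<dots> = gauss_binom q (Suc n) k * qfact q k * qfact q (Suc n - k)"
      unfolding left right by (simp add: Suc algebra_simps)
    finally show ?thesis .
  qed simp
qed simp

lemma qfact_neq_0: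
  assumes "\<And>i. 1 \<le> i \<Longrightarrow> i \<le> k \<Longrightarrow> q ^ i \<noteq> 1"
  shows "qfact q k \<noteq> 0"
  using assms by (auto simp: qfact_def qnat_def)

lemma qbinom_eq_gauss_binom:
  assumes "q \<noteq> 1" and "\<And>i. 1 \<le> i \<Longrightarrow> i \<le> n \<Longrightarrow> q ^ i \<noteq> 1" and "k \<le> n"
  shows "qbinom q n k = gauss_binom q n k"
proof -
  have "qfact q k \<noteq> 0" "qfact q (n - k) \<noteq> 0"
    using assms by (auto intro!: qfact_neq_0)
  then show ?thesis
    unfolding qbinom_def qfact_eq_gauss_binom[OF assms(1,3)] by simp
qed

definition newton_prod :: "'a::field \<Rightarrow> 'a poly \<Rightarrow> nat \<Rightarrow> 'a poly" where
  "newton_prod q z k = (\<Prod>i<k. z - [:q ^ i:])"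

lemma newton_prod_Suc: "newton_prod q z (Suc k) = newton_prod q z k * (z - [:q ^ k:])"
  unfolding newton_prod_def by simp

lemma power_eq_sum_gauss_binom_newton_prod:
  "z ^ n = (\<Sum>k\<le>n. smult (gauss_binom q n k) (newton_prod q z k))"
proof (induction n)
  case 0
  then show ?case by (simp add: newton_prod_def)
next
  case (Suc n)
  have z_newton: "z * newton_prod q z k = newton_prod q z (Suc k) + smult (q ^ k) (newton_prod q z k)" for k
  proof -
    have "newton_prod q z k * [:q ^ k:] = smult (q ^ k) (newton_prod q z k)"
      by (subst mult.commute) simp
    then show ?thesis
      unfolding newton_prod_Suc right_diff_distrib by (simp add: mult.commute)
  qed
  have "z ^ Suc n = (\<Sum>k\<le>n. smult (gauss_binom q n k) (newton_prod q z (Suc k)))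
      + (\<Sum>k\<le>n. smult (gauss_binom q n k * q ^ k) (newton_prod q z k))"
    using Suc by (simp add: sum_distrib_left z_newton smult_add_right sum.distrib mult.commute)
  also have "(\<Sum>k\<le>n. smult (gauss_binom q n k * q ^ k) (newton_prod q z k))
      = (\<Sum>k\<le>Suc n. smult (gauss_binom q n k * q ^ k) (newton_prod q z k))"
    by (simp add: gauss_binom_eq_0)
  also have "\<dots> = newton_prod q z 0
      + (\<Sum>k\<le>n. smult (gauss_binom q n (Suc k) * q ^ Suc k) (newton_prod q z (Suc k)))"
    by (subst sum.atMost_Suc_shift) simp
  finally have "z ^ Suc n = newton_prod q z 0
      + (\<Sum>k\<le>n. smult (gauss_binom q n k) (newton_prod q z (Suc k))
                + smult (gauss_binom q n (Suc k) * q ^ Suc k) (newton_prod q z (Suc k)))"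
    by (simp add: sum.distrib algebra_simps)
  also have "\<dots> = (\<Sum>k\<le>Suc n. smult (gauss_binom q (Suc n) k) (newton_prod q z k))"
    by (subst sum.atMost_Suc_shift) (simp add: smult_add_left algebra_simps)
  finally show ?case .
qed

definition qfalling_poly :: "'a::field \<Rightarrow> nat \<Rightarrow> 'a poly" where
  "qfalling_poly q k = (\<Prod>i<k. [:- qnat q i, 1:])"

lemma qstirling1_eq_coeff_qfalling_poly:
  assumes "q \<noteq> 0"
  shows "qstirling1 q k l = coeff (qfalling_poly q k) l"
proof -
  have "q ^ (k choose 2) * (\<Prod>i<k. inverse q ^ i) = 1"
  proof (induction k)
    case (Suc k)
    have "(Suc k choose 2) = (k choose 2) + k" by (simp add: numeral_2_eq_2)
    then show ?case
      using Suc assms by (simp add: power_add mult_ac flip: power_mult_distrib)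
  qed (simp add: numeral_2_eq_2)
  then show ?thesis
    unfolding qstirling1_def qfalling_poly_def prod_smult by simp
qed

lemma coeff_qfalling_poly_eq_0:
  assumes "k < l"
  shows "coeff (qfalling_poly q k) l = 0"
proof -
  have "degree (qfalling_poly q k) \<le> k"
    unfolding qfalling_poly_def
    using degree_prod_sum_le[of "{..<k}" "\<lambda>i. [:- qnat q i, 1:]"] by (simp add: o_def)
  then show ?thesis using assms by (intro coeff_eq_0) simp
qed

text \<open>Since \<open>(1 + (q - 1) t) - q\<^sup>i = (q - 1) (t - [i]\<^sub>q)\<close>.\<close>
lemma smult_qfalling_poly_eq_newton_prod:
  assumes "q \<noteq> 1"
  shows "smult ((q - 1) ^ k) (qfalling_poly q k) = newton_prod q [:1, q - 1:] k"
proof (induction k)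
  case 0
  then show ?case by (simp add: qfalling_poly_def newton_prod_def)
next
  case (Suc k)
  have "(q - 1) * qnat q k = q ^ k - 1"
    using assms unfolding qnat_def by (simp add: field_simps)
  then have factor: "smult (q - 1) [:- qnat q k, 1:] = [:1, q - 1:] - [:q ^ k:]"
    by simp
  have "qfalling_poly q (Suc k) = qfalling_poly q k * [:- qnat q k, 1:]"
    unfolding qfalling_poly_def by simp
  then have "smult ((q - 1) ^ Suc k) (qfalling_poly q (Suc k))
      = smult ((q - 1) ^ k) (qfalling_poly q k) * smult (q - 1) [:- qnat q k, 1:]"
    by (simp only: mult_smult_left mult_smult_right smult_smult) (simp add: mult.commute)
  also have "\<dots> = newton_prod q [:1, q - 1:] (Suc k)"
    by (simp only: Suc.IH factor newton_prod_Suc)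
  finally show ?case .
qed

text \<open>Compare the coefficients of \<open>t\<^sup>l\<close> in the Newton expansion of \<open>(1 + (q - 1) t)\<^sup>n\<close>.\<close>
lemma sum_qbinom_qstirling1:
  fixes q :: "'a::field"
  assumes "q \<noteq> 0" and "q \<noteq> 1" and "\<And>i. 1 \<le> i \<Longrightarrow> i \<le> n \<Longrightarrow> q ^ i \<noteq> 1" and "l \<le> n"
  shows "(\<Sum>k=l..n. (q - 1) ^ (k - l) * qbinom q n k * qstirling1 q k l) = of_nat (n choose l)"
proof -
  have "(q - 1) ^ l * of_nat (n choose l) = coeff ([:1, q - 1:] ^ n) l"
    using assms(4) by (simp add: coeff_linear_poly_power)
  also have "\<dots> = (\<Sum>k\<le>n. gauss_binom q n k * (q - 1) ^ k * coeff (qfalling_poly q k) l)"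
    unfolding power_eq_sum_gauss_binom_newton_prod[of _ n q]
      smult_qfalling_poly_eq_newton_prod[OF assms(2), symmetric]
    by (simp add: coeff_sum mult_ac)
  also have "\<dots> = (\<Sum>k=l..n. gauss_binom q n k * (q - 1) ^ k * coeff (qfalling_poly q k) l)"
    by (rule sum.mono_neutral_right) (auto simp: coeff_qfalling_poly_eq_0)
  also have "\<dots> = (q - 1) ^ l * (\<Sum>k=l..n. (q - 1) ^ (k - l) * qbinom q n k * qstirling1 q k l)"
    unfolding sum_distrib_left
  proof (rule sum.cong)
    fix k
    assume k: "k \<in> {l..n}"
    then have "(q - 1) ^ k = (q - 1) ^ l * (q - 1) ^ (k - l)"
      by (simp flip: power_add)
    then show "gauss_binom q n k * (q - 1) ^ k * coeff (qfalling_poly q k) l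
        = (q - 1) ^ l * ((q - 1) ^ (k - l) * qbinom q n k * qstirling1 q k l)"
      using k assms by (simp add: qbinom_eq_gauss_binom qstirling1_eq_coeff_qfalling_poly mult_ac)
  qed simp
  finally show ?thesis using assms(2) by simp
qed

lemma double_sum_qbinom_qstirling1:
  fixes q :: "'a::field"
  assumes "q \<noteq> 0" and "q \<noteq> 1" and "\<And>i. 1 \<le> i \<Longrightarrow> i \<le> n \<Longrightarrow> q ^ i \<noteq> 1"
  shows "(\<Sum>l=0..n. \<Sum>k=l..n. (-1) ^ l * (q - 1) ^ (k - l) * qbinom q n k * qstirling1 q k l * c l / d l)
    = (\<Sum>l\<le>n. (-1) ^ l * of_nat (n choose l) * c l / d l)"
  unfolding atLeast0AtMost
proof (rule sum.cong)
  fix l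
  assume "l \<in> {..n}"
  then have "(\<Sum>k=l..n. (q - 1) ^ (k - l) * qbinom q n k * qstirling1 q k l) = of_nat (n choose l)"
    using assms by (intro sum_qbinom_qstirling1) auto
  then show "(\<Sum>k=l..n. (-1) ^ l * (q - 1) ^ (k - l) * qbinom q n k * qstirling1 q k l * c l / d l)
      = (-1) ^ l * of_nat (n choose l) * c l / d l"
    unfolding sum_divide_distrib[symmetric] sum_distrib_right[symmetric]
    by (simp only: sum_distrib_left[symmetric] mult.assoc)
qed simp

section \<open>The fermionic integral of \<open>[x + y]\<^sub>q\<^sup>n\<close>\<close>

lemma sum_alternating_powers_odd:
  fixes w :: "'a::field"
  assumes "odd M" and "1 + w \<noteq> 0"
  shows "(\<Sum>y<M. (- w) ^ y) = (1 + w ^ M) / (1 + w)"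
proof -
  have "(1 + w) * (\<Sum>y<M. (- w) ^ y) = 1 + w ^ M"
    using one_diff_power_eq[of "- w" M] assms(1) by simp
  then show ?thesis using assms(2) by (simp add: eq_divide_eq mult.commute)
qed

lemma sum_power_one_minus_alternating:
  fixes Q w D :: "'a::field"
  shows "(\<Sum>y<M. ((1 - Q * w ^ y) / D) ^ n * (-1) ^ y) =
    (\<Sum>l\<le>n. of_nat (n choose l) * (- Q) ^ l / D ^ n * (\<Sum>y<M. (- (w ^ l)) ^ y))"
proof -
  have "((1 - Q * w ^ y) / D) ^ n * (-1) ^ y =
      (\<Sum>l\<le>n. of_nat (n choose l) * (- Q) ^ l / D ^ n * (- (w ^ l)) ^ y)" for y
  proof -
    have "(1 - Q * w ^ y) ^ n = (\<Sum>l\<le>n. of_nat (n choose l) * (- Q * w ^ y) ^ l)"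
      using binomial_ring[of "- Q * w ^ y" 1 n] by simp
    moreover have "(- Q * w ^ y) ^ l * (-1) ^ y = (- Q) ^ l * (- (w ^ l)) ^ y" for l
    proof -
      have "(w ^ y) ^ l = (w ^ l) ^ y" by (simp add: mult.commute flip: power_mult)
      then show ?thesis by (simp only: power_mult_distrib power_minus[of "w ^ l"] mult_ac)
    qed
    ultimately show ?thesis
      by (simp add: power_divide sum_divide_distrib sum_distrib_right mult.assoc)
  qed
  then show ?thesis
    unfolding sum_distrib_left by (simp only: sum.swap[of _ "{..<M}"])
qed

locale q_near_1_complete = q_near_1 +
  assumes complete: "vcauchy v X \<Longrightarrow> \<exists>L. vconv v X L"
begin

lemma vconv_qpow:
  assumes X: "vconv v (\<lambda>k. of_nat (X k)) x"
  shows "vconv v (\<lambda>k. q ^ X k) (qpow v q x)"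
proof -
  obtain y where y: "vconv v (\<lambda>k. q ^ X k) y"
    using complete vcauchy_q_power[OF X] by blast
  have "vconv v (\<lambda>k. q ^ Y k) y" if "vconv v (\<lambda>k. of_nat (Y k)) x" for Y :: "nat \<Rightarrow> nat"
    using vconv_add[OF vconv_q_power_diff[OF that X] y] by simp
  then have "qpow v q x = y"
    unfolding qpow_def using X y vconv_unique by (intro the_equality) blast+
  with y show ?thesis by simp
qed

lemma qpow_add_of_nat:
  assumes "x \<in> Zp v"
  shows "qpow v q (x + of_nat y) = qpow v q x * q ^ y"
proof -
  obtain X where X: "vconv v (\<lambda>k. of_nat (X k)) x" using assms unfolding Zp_def by blast
  then have "vconv v (\<lambda>k. of_nat (X k + y)) (x + of_nat y)"
    using vconv_add[OF X vconv_const] by simp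
  from vconv_qpow[OF this] have "vconv v (\<lambda>k. q ^ X k * q ^ y) (qpow v q (x + of_nat y))"
    by (simp add: power_add)
  moreover have "vconv v (\<lambda>k. q ^ X k * q ^ y) (qpow v q x * q ^ y)"
    by (rule vconv_mult[OF vconv_qpow[OF X] vconv_const])
  ultimately show ?thesis by (rule vconv_unique)
qed

lemma qpow_of_nat_mult:
  assumes "x \<in> Zp v"
  shows "qpow v q (of_nat l * x) = qpow v q x ^ l"
proof -
  obtain X where X: "vconv v (\<lambda>k. of_nat (X k)) x" using assms unfolding Zp_def by blast
  then have "vconv v (\<lambda>k. of_nat (X k * l)) (of_nat l * x)"
    using vconv_cmult[OF X, of "of_nat l"] by (simp add: mult.commute)
  from vconv_qpow[OF this] have "vconv v (\<lambda>k. (q ^ X k) ^ l) (qpow v q (of_nat l * x))"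
    by (simp add: power_mult)
  moreover have "vconv v (\<lambda>k. (q ^ X k) ^ l) (qpow v q x ^ l)"
    by (rule vconv_power[OF vconv_qpow[OF X]])
  ultimately show ?thesis by (rule vconv_unique)
qed

lemma qEuler_eq_binomial_sum:
  assumes "odd p" and x: "x \<in> Zp v"
  shows "qEuler p v q n x =
    2 / (1 - q) ^ n * (\<Sum>l\<le>n. (-1) ^ l * of_nat (n choose l) * qpow v q x ^ l / (1 + q ^ l))"
proof -
  define b where "b l = of_nat (n choose l) * (- qpow v q x) ^ l / (1 - q) ^ n" for l
  have riemann: "(\<Sum>y<p ^ N. qint v q (x + of_nat y) ^ n * (-1) ^ y)
      = (\<Sum>l\<le>n. b l * ((1 + (q ^ p ^ N) ^ l) * inverse (1 + q ^ l)))" for N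
  proof -
    have "qint v q (x + of_nat y) = (1 - qpow v q x * q ^ y) / (1 - q)" for y
      by (simp add: qint_def qpow_add_of_nat[OF x])
    moreover have "(\<Sum>y<p ^ N. (- (q ^ l)) ^ y) = (1 + (q ^ p ^ N) ^ l) * inverse (1 + q ^ l)" for l
      using sum_alternating_powers_odd[of "p ^ N" "q ^ l"] one_plus_q_power_neq_0 assms(1)
      by (simp add: divide_inverse mult.commute flip: power_mult)
    ultimately show ?thesis
      by (simp only: sum_power_one_minus_alternating b_def)
  qed
  have "vconv v (\<lambda>N. \<Sum>y<p ^ N. qint v q (x + of_nat y) ^ n * (-1) ^ y)
      (\<Sum>l\<le>n. b l * ((1 + 1 ^ l) * inverse (1 + q ^ l)))"
    unfolding riemann
    by (intro vconv_sum vconv_mult vconv_add vconv_const vconv_power vconv_q_power_p_power)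
  then have "qEuler p v q n x = (\<Sum>l\<le>n. b l * ((1 + 1 ^ l) * inverse (1 + q ^ l)))"
    unfolding qEuler_def by (rule fermionic_int_eqI)
  also have "\<dots> = 2 / (1 - q) ^ n *
      (\<Sum>l\<le>n. (-1) ^ l * of_nat (n choose l) * qpow v q x ^ l / (1 + q ^ l))"
    unfolding sum_distrib_left b_def
    by (rule sum.cong) (simp_all only: power_one one_add_one power_minus[of "qpow v q x"] divide_inverse mult_ac)
  finally show ?thesis .
qed

end

text \<open>For \<open>q = 1\<close> both sides vanish because division by zero yields zero.\<close>
theorem mainTheorem4:
  fixes p :: nat and v :: "'a::field_char_0 \<Rightarrow> real" and q x :: 'a and n :: nat
  assumes "prime p" and "odd p"
    and "is_Cp p v"
    and "v (1 - q) < real p powr (- 1 / (real p - 1))"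
    and "0 < n"
    and "x \<in> Zp v"
  shows "qEuler p v q n x =
    2 / (1 - q) ^ n *
    (\<Sum>l=0..n. \<Sum>k=l..n. (-1) ^ l * (q - 1) ^ (k - l) * qbinom q n k * qstirling1 q k l
        * qpow v q (of_nat l * x) / (1 + q ^ l))"
proof -
  interpret q_near_1_complete p v q
    using assms(1,3,4) by unfold_locales (auto simp: is_Cp_def)
  have "qEuler p v q n x =
      2 / (1 - q) ^ n * (\<Sum>l\<le>n. (-1) ^ l * of_nat (n choose l) * qpow v q x ^ l / (1 + q ^ l))"
    using assms(2,6) by (rule qEuler_eq_binomial_sum)
  also have "\<dots> = 2 / (1 - q) ^ n *
    (\<Sum>l=0..n. \<Sum>k=l..n. (-1) ^ l * (q - 1) ^ (k - l) * qbinom q n k * qstirling1 q k l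
        * qpow v q (of_nat l * x) / (1 + q ^ l))"
  proof (cases "q = 1")
    case False
    have "q ^ i \<noteq> 1" if "1 \<le> i" for i
      using q_eq_1_if_power_eq_1 False that by fastforce
    then show ?thesis
      using double_sum_qbinom_qstirling1[OF q_neq_0 False, of n "\<lambda>l. qpow v q (of_nat l * x)"]
      by (simp add: qpow_of_nat_mult[OF assms(6)])
  next
    case True
    then have "(1 - q) ^ n = 0" using assms(5) by simp
    then show ?thesis by (simp only: div_by_0 mult_zero_left)
  qed
  finally show ?thesis .
qed

end
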